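(* Let $\Gamma$ be a regular axis-parallel square grid in the plane whose squares have diameter $1$ (side length $1/\sqrt{2}$), and call the open squares of $\Gamma$ cells. Let $p$ and $q$ be any two points in the plane, each lying in some cell, with $|pq|\le 1$, and let $D(p,q)$ be the closed disk having segment $pq$ as a diameter. 1. If $p$ and $q$ are in different cells, then $D(p,q)$ intersects at most $7$ cells. 2. If $p$ and $q$ are in the same cell $\pi$, then the only cells that $D(p,q)$ can intersect are $\pi$ and its four $+$-neighbors.
   Context: The $+$-neighbors of a cell $\pi$ are the four cells that share a side with $\pi$. Cells are open (they do not contain their boundary), and disks are closed. *)

theory Defs
  imports "HOL-Analysis.Analysis"
begin

text \<open>Points of the plane are pairs of reals; the metric on real \<times> real in
HOL-Analysis is the Euclidean one. The grid has side length 1/sqrt 2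
(so each square has diameter 1) and an arbitrary offset (a, b).\<close>

definition grid_side :: real where
  "grid_side = 1 / sqrt 2"

definition cell :: "real \<Rightarrow> real \<Rightarrow> int \<Rightarrow> int \<Rightarrow> (real \<times> real) set" where
  "cell a b i j = {(x, y). a + of_int i * grid_side < x \<and> x < a + of_int (i + 1) * grid_side
                       \<and> b + of_int j * grid_side < y \<and> y < b + of_int (j + 1) * grid_side}"

definition diam_disk :: "real \<times> real \<Rightarrow> real \<times> real \<Rightarrow> (real \<times> real) set" where
  "diam_disk p q = cball (midpoint p q) (dist p q / 2)"

definition cells_hit :: "real \<Rightarrow> real \<Rightarrow> (real \<times> real) set \<Rightarrow> (int \<times> int) set" where
  "cells_hit a b S = {(k, l). S \<inter> cell a b k l \<noteq> {}}"

end

theory Submission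
  imports Defs
begin

text \<open>
  Both parts reduce to one-dimensional facts about the rows and columns of the grid,
  whose width s = 1/sqrt 2 exceeds 1/2.

  A disk of diameter at most 1 has radius at most 1/2 < s, so it only meets the
  3 \<times> 3 block of cells around the cell index of its centre. Two cells at opposite
  corners of this block are separated by more than s in both coordinates, hence their
  points are more than sqrt 2 \<cdot> s = 1 apart; so each diagonal pair of corners of the
  block contributes at most one cell, and at most 7 cells are met.

  If p and q lie in the same cell, Thales' theorem says z \<in> D(p,q) iff
  (z - p) \<bullet> (z - q) \<le> 0. Its first coordinate term (x - p1)(x - q1), with p1 and q1
  in the same column, exceeds -s^2/4, is positive if x lies in another column, and
  exceeds s^2 if x lies two or more columns away; likewise for the second coordinate.
  A non-positive sum of the two terms therefore forces z into the cell itself or one of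
  its four +-neighbours.
\<close>

definition slab :: "real \<Rightarrow> real \<Rightarrow> int \<Rightarrow> real set" where
  "slab c s k = {c + of_int k * s <..< c + of_int (k + 1) * s}"

lemma cell_eq_Times: "cell a b i j = slab a grid_side i \<times> slab b grid_side j"
  by (auto simp: cell_def slab_def)

lemma grid_side_pos: "0 < grid_side"
  by (simp add: grid_side_def)

lemma sqrt2_mult_grid_side: "sqrt 2 * grid_side = 1"
  by (simp add: grid_side_def)

lemma grid_side_gt_half: "1/2 < grid_side"
proof -
  have "sqrt 2 < 2"
    using real_sqrt_less_iff[of 2 4] by simp
  thus ?thesis by (simp add: grid_side_def field_simps)
qed

lemma floor_divide_slab:
  assumes "0 < s" "x \<in> slab c s k"
  shows "\<lfloor>(x - c) / s\<rfloor> = k"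
  using assms by (auto simp: slab_def floor_eq_iff field_simps)

lemma slab_index_close:
  assumes "0 < s" "x \<in> slab c s k" "\<bar>x - y\<bar> < s"
  shows "\<bar>k - \<lfloor>(y - c) / s\<rfloor>\<bar> \<le> 1"
proof -
  have "\<bar>(x - c) / s - (y - c) / s\<bar> < 1"
    using assms by (simp add: diff_divide_distrib[symmetric] abs_divide)
  thus ?thesis
    using floor_divide_slab[OF assms(1,2)] by linarith
qed

lemma slab_gap:
  assumes "0 < s" "x \<in> slab c s k" "y \<in> slab c s l" "2 \<le> \<bar>k - l\<bar>"
  shows "s < \<bar>x - y\<bar>"
proof -
  have "of_int k * s + 2 * s \<le> of_int l * s \<or> of_int l * s + 2 * s \<le> of_int k * s"
    using assms(1,4) mult_right_mono[of "of_int _ + 2" "of_int _" s]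
    by (cases "k \<le> l") (auto simp: distrib_right)
  thus ?thesis using assms(2,3) by (auto simp: slab_def distrib_right)
qed

lemma slab_diff_lt:
  assumes "x \<in> slab c s k" "y \<in> slab c s k"
  shows "\<bar>x - y\<bar> < s"
  using assms by (auto simp: slab_def distrib_right)

lemma slab_outside_mult_pos:
  assumes "0 < s" "p \<in> slab c s i" "q \<in> slab c s i" "x \<in> slab c s k" "k \<noteq> i"
  shows "0 < (x - p) * (x - q)"
proof -
  have "of_int k * s + s \<le> of_int i * s \<or> of_int i * s + s \<le> of_int k * s"
    using assms(1,5) mult_right_mono[of "of_int _ + 1" "of_int _" s]
    by (cases "k < i") (auto simp: distrib_right)
  hence "(x < p \<and> x < q) \<or> (p < x \<and> q < x)"
    using assms(2-4) by (auto simp: slab_def distrib_right)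
  thus ?thesis by (auto simp: mult_pos_pos mult_neg_neg)
qed

lemma slab_far_mult_gt:
  assumes "0 < s" "p \<in> slab c s i" "q \<in> slab c s i" "x \<in> slab c s k" "2 \<le> \<bar>k - i\<bar>"
  shows "s * s < (x - p) * (x - q)"
proof -
  have "0 < (x - p) * (x - q)"
    using slab_outside_mult_pos[OF assms(1-4)] assms(5) by fastforce
  hence "(x - p) * (x - q) = \<bar>x - p\<bar> * \<bar>x - q\<bar>"
    by (simp add: abs_mult[symmetric])
  moreover have "s * s < \<bar>x - p\<bar> * \<bar>x - q\<bar>"
    using slab_gap[OF assms(1,4,2)] slab_gap[OF assms(1,4,3)] assms(1,5)
    by (intro mult_strict_mono) auto
  ultimately show ?thesis by simp
qed

lemma diff_mult_diff_ge:
  fixes x p q :: real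
  shows "- ((p - q) * (p - q)) / 4 \<le> (x - p) * (x - q)"
proof -
  have "(x - p) * (x - q) = (x - (p + q) / 2)\<^sup>2 - (p - q) * (p - q) / 4"
    by (simp add: power2_eq_square field_simps)
  thus ?thesis by simp
qed

lemma slab_mult_gt_neg_quarter:
  assumes "p \<in> slab c s i" "q \<in> slab c s i"
  shows "- (s * s) / 4 < (x - p) * (x - q)"
proof -
  have "\<bar>p - q\<bar> * \<bar>p - q\<bar> < s * s"
    using slab_diff_lt[OF assms] by (intro mult_strict_mono) auto
  thus ?thesis using diff_mult_diff_ge[of p q x] by (simp add: abs_mult_self_eq)
qed

lemma norm_half_sum_sq:
  fixes u v :: "'a::real_inner"
  shows "(norm ((1/2) *\<^sub>R (u + v)))\<^sup>2 = (norm (v - u) / 2)\<^sup>2 + inner u v"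
  by (simp add: power2_norm_eq_inner inner_add inner_diff inner_commute power_divide
      field_simps)

lemma dist_midpoint_sq:
  fixes z p q :: "'a::real_inner"
  shows "(dist z (midpoint p q))\<^sup>2 = (dist p q / 2)\<^sup>2 + inner (z - p) (z - q)"
proof -
  have "z - midpoint p q = (1/2) *\<^sub>R ((z - p) + (z - q))" "p - q = (z - q) - (z - p)"
    by (simp_all add: midpoint_def algebra_simps flip: scaleR_add_left)
  thus ?thesis unfolding dist_norm by (simp only: norm_half_sum_sq)
qed

lemma mem_diam_disk_iff: "z \<in> diam_disk p q \<longleftrightarrow> inner (z - p) (z - q) \<le> 0"
proof -
  have "z \<in> diam_disk p q \<longleftrightarrow> (dist z (midpoint p q))\<^sup>2 \<le> (dist p q / 2)\<^sup>2"
    by (simp add: diam_disk_def dist_commute)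
  thus ?thesis by (simp add: dist_midpoint_sq)
qed

lemma dist_gt_of_coordinate_gaps:
  fixes z1 z2 :: "real \<times> real"
  assumes "0 \<le> s" "s < \<bar>fst z1 - fst z2\<bar>" "s < \<bar>snd z1 - snd z2\<bar>"
  shows "sqrt 2 * s < dist z1 z2"
proof -
  have "s * s < \<bar>fst z1 - fst z2\<bar> * \<bar>fst z1 - fst z2\<bar>"
    using assms(1,2) by (intro mult_strict_mono) auto
  moreover have "s * s < \<bar>snd z1 - snd z2\<bar> * \<bar>snd z1 - snd z2\<bar>"
    using assms(1,3) by (intro mult_strict_mono) auto
  ultimately
  have "2 * s\<^sup>2 < (fst z1 - fst z2)\<^sup>2 + (snd z1 - snd z2)\<^sup>2"
    by (simp add: power2_eq_square)
  hence "sqrt (2 * s\<^sup>2) < dist z1 z2"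
    by (simp add: dist_prod_def dist_real_def)
  thus ?thesis using assms(1) by (simp add: real_sqrt_mult)
qed

lemma cells_hit_cball_near_center:
  assumes "r \<le> 1/2" "(k, l) \<in> cells_hit a b (cball c r)"
  shows "\<bar>k - \<lfloor>(fst c - a) / grid_side\<rfloor>\<bar> \<le> 1 \<and> \<bar>l - \<lfloor>(snd c - b) / grid_side\<rfloor>\<bar> \<le> 1"
proof -
  obtain z where z: "dist c z \<le> r" "fst z \<in> slab a grid_side k" "snd z \<in> slab b grid_side l"
    using assms(2) by (auto simp: cells_hit_def cell_eq_Times mem_Times_iff)
  have "\<bar>fst z - fst c\<bar> < grid_side" "\<bar>snd z - snd c\<bar> < grid_side"
    using dist_fst_le[of z c] dist_snd_le[of z c] z(1) assms(1) grid_side_gt_half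
    by (auto simp: dist_real_def dist_commute)
  thus ?thesis
    using slab_index_close[OF grid_side_pos] z(2,3) by blast
qed

lemma cells_hit_cball_no_opposite_corners:
  assumes "r \<le> 1/2" "(k1, l1) \<in> cells_hit a b (cball c r)" "(k2, l2) \<in> cells_hit a b (cball c r)"
  shows "\<bar>k1 - k2\<bar> \<le> 1 \<or> \<bar>l1 - l2\<bar> \<le> 1"
proof (rule ccontr)
  assume "\<not> ?thesis"
  hence gaps: "2 \<le> \<bar>k1 - k2\<bar>" "2 \<le> \<bar>l1 - l2\<bar>" by auto
  obtain z1 where z1: "dist c z1 \<le> r" "fst z1 \<in> slab a grid_side k1" "snd z1 \<in> slab b grid_side l1"
    using assms(2) by (auto simp: cells_hit_def cell_eq_Times mem_Times_iff)
  obtain z2 where z2: "dist c z2 \<le> r" "fst z2 \<in> slab a grid_side k2" "snd z2 \<in> slab b grid_side l2"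
    using assms(3) by (auto simp: cells_hit_def cell_eq_Times mem_Times_iff)
  have "grid_side < \<bar>fst z1 - fst z2\<bar>" "grid_side < \<bar>snd z1 - snd z2\<bar>"
    using slab_gap[OF grid_side_pos] z1(2,3) z2(2,3) gaps by blast+
  hence "sqrt 2 * grid_side < dist z1 z2"
    using grid_side_pos by (intro dist_gt_of_coordinate_gaps) auto
  moreover have "dist z1 z2 \<le> 1"
    using dist_triangle[of z1 z2 c] z1(1) z2(1) assms(1) by (simp add: dist_commute)
  ultimately show False by (simp add: sqrt2_mult_grid_side)
qed

lemma card_le_7_if_no_opposite_corners:
  fixes H :: "(int \<times> int) set"
  assumes block: "H \<subseteq> {n - 1..n + 1} \<times> {m - 1..m + 1}"
    and corners: "\<And>k1 l1 k2 l2. (k1, l1) \<in> H \<Longrightarrow> (k2, l2) \<in> H \<Longrightarrow> \<bar>k1 - k2\<bar> \<le> 1 \<or> \<bar>l1 - l2\<bar> \<le> 1"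
  shows "card H \<le> 7"
proof -
  obtain e1 where e1: "e1 \<in> {(n - 1, m - 1), (n + 1, m + 1)}" "e1 \<notin> H"
    using corners[of "n - 1" "m - 1" "n + 1" "m + 1"] by auto
  obtain e2 where e2: "e2 \<in> {(n - 1, m + 1), (n + 1, m - 1)}" "e2 \<notin> H"
    using corners[of "n - 1" "m + 1" "n + 1" "m - 1"] by auto
  have "H \<subseteq> {n - 1..n + 1} \<times> {m - 1..m + 1} - {e1, e2}"
    using block e1(2) e2(2) by blast
  moreover have "card ({n - 1..n + 1} \<times> {m - 1..m + 1} - {e1, e2}) = 7"
    using e1(1) e2(1) by (subst card_Diff_subset) (auto simp: card_cartesian_product)
  ultimately show ?thesis
    by (metis card_mono finite_Diff finite_SigmaI finite_atLeastAtMost_int)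
qed

lemma card_cells_hit_cball:
  assumes "r \<le> 1/2"
  shows "finite (cells_hit a b (cball c r)) \<and> card (cells_hit a b (cball c r)) \<le> 7"
proof -
  define n where "n = \<lfloor>(fst c - a) / grid_side\<rfloor>"
  define m where "m = \<lfloor>(snd c - b) / grid_side\<rfloor>"
  have block: "cells_hit a b (cball c r) \<subseteq> {n - 1..n + 1} \<times> {m - 1..m + 1}"
    using cells_hit_cball_near_center[OF assms] unfolding n_def m_def by fastforce
  show ?thesis
  proof
    show "finite (cells_hit a b (cball c r))"
      using block by (rule finite_subset) simp
    show "card (cells_hit a b (cball c r)) \<le> 7"
      using block cells_hit_cball_no_opposite_corners[OF assms]
      by (rule card_le_7_if_no_opposite_corners)
  qed
qed

lemma diam_disk_in_cell_hits_plus_neighbor: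
  assumes p: "p \<in> cell a b i j" and q: "q \<in> cell a b i j"
    and z: "z \<in> diam_disk p q" "z \<in> cell a b k l"
  shows "(k, l) \<in> {(i, j), (i + 1, j), (i - 1, j), (i, j + 1), (i, j - 1)}"
proof -
  let ?s = grid_side
  define X where "X = (fst z - fst p) * (fst z - fst q)"
  define Y where "Y = (snd z - snd p) * (snd z - snd q)"
  have slabs: "fst p \<in> slab a ?s i" "fst q \<in> slab a ?s i" "fst z \<in> slab a ?s k"
    "snd p \<in> slab b ?s j" "snd q \<in> slab b ?s j" "snd z \<in> slab b ?s l"
    using p q z(2) by (auto simp: cell_eq_Times mem_Times_iff)
  have "X + Y \<le> 0"
    using z(1) unfolding mem_diam_disk_iff X_def Y_def by (simp add: inner_prod_def)
  moreover have "- (?s * ?s) / 4 < X" "- (?s * ?s) / 4 < Y"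
    unfolding X_def Y_def
    using slab_mult_gt_neg_quarter[OF slabs(1,2)] slab_mult_gt_neg_quarter[OF slabs(4,5)] by blast+
  moreover have "k \<noteq> i \<longrightarrow> 0 < X" "l \<noteq> j \<longrightarrow> 0 < Y"
    unfolding X_def Y_def using slabs by (auto intro: slab_outside_mult_pos[OF grid_side_pos])
  moreover have "2 \<le> \<bar>k - i\<bar> \<longrightarrow> ?s * ?s < X" "2 \<le> \<bar>l - j\<bar> \<longrightarrow> ?s * ?s < Y"
    unfolding X_def Y_def using slabs by (auto intro: slab_far_mult_gt[OF grid_side_pos])
  moreover have "0 < ?s * ?s" using grid_side_pos by simp
  ultimately have "(k = i \<or> l = j) \<and> \<bar>k - i\<bar> \<le> 1 \<and> \<bar>l - j\<bar> \<le> 1"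
    by linarith
  thus ?thesis by auto
qed

theorem lemma4:
  fixes a b :: real and p q :: "real \<times> real" and i j i' j' :: int
  assumes p_in: "p \<in> cell a b i j"
    and q_in: "q \<in> cell a b i' j'"
    and close: "dist p q \<le> 1"
  shows "((i, j) \<noteq> (i', j') \<longrightarrow>
            finite (cells_hit a b (diam_disk p q)) \<and> card (cells_hit a b (diam_disk p q)) \<le> 7)
       \<and> ((i, j) = (i', j') \<longrightarrow>
            cells_hit a b (diam_disk p q) \<subseteq> {(i, j), (i + 1, j), (i - 1, j), (i, j + 1), (i, j - 1)})"
proof (rule conjI; intro impI)
  show "finite (cells_hit a b (diam_disk p q)) \<and> card (cells_hit a b (diam_disk p q)) \<le> 7"
    using card_cells_hit_cball[of "dist p q / 2"] close unfolding diam_disk_def by simp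
  assume "(i, j) = (i', j')"
  then have "q \<in> cell a b i j" using q_in by simp
  then show "cells_hit a b (diam_disk p q) \<subseteq> {(i, j), (i + 1, j), (i - 1, j), (i, j + 1), (i, j - 1)}"
    using diam_disk_in_cell_hits_plus_neighbor[OF p_in] unfolding cells_hit_def by blast
qed

end
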